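(* Let $S=\{x_1,\dots,x_N\}\subset\mathbb{R}^n$ be a two-distance tight frame for $\mathbb{R}^n$ with inner products $a,b$ satisfying $a^2\neq b^2$. Then $S$ is regular: for every $i$, the number $N_{a,i}=|\{j:\langle x_i,x_j\rangle=a\}|$ equals $$N_a=\frac{(N/n)-1-(N-1)b^2}{a^2-b^2}.$$ Moreover, either $-n(a+b)-nab(N-1)=N-n$ (this happens exactly when each row of the Gram matrix $G=(\langle x_i,x_j\rangle)$ sums to $0$), or $(N-n)(a+b)-nab(N-1)=N-n$ (this happens exactly when each row of $G$ sums to $N/n$).
   Context: A two-distance tight frame for $\mathbb{R}^n$ is a finite set of unit vectors $\{x_1,\dots,x_N\}\subset\mathbb{R}^n$ such that (1) there are two real numbers $a\neq b$ with $\langle x_i,x_j\rangle\in\{a,b\}$ for all $i\neq j$, and (2) $\sum_{i=1}^N\langle x,x_i\rangle^2=\frac{N}{n}\|x\|^2$ for all $x\in\mathbb{R}^n$. *)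

theory Defs
  imports "HOL-Analysis.Analysis"
begin

definition two_distance_tight_frame :: "(real^'n) set \<Rightarrow> real \<Rightarrow> real \<Rightarrow> bool" where
  "two_distance_tight_frame S a b \<longleftrightarrow>
     finite S \<and> S \<noteq> {} \<and> (\<forall>x\<in>S. norm x = 1) \<and> a \<noteq> b \<and>
     (\<forall>x\<in>S. \<forall>y\<in>S. x \<noteq> y \<longrightarrow> x \<bullet> y = a \<or> x \<bullet> y = b) \<and>
     (\<forall>v::real^'n. (\<Sum>y\<in>S. (v \<bullet> y)^2) = real (card S) / real CARD('n) * (norm v)^2)"

end

theory Submission
  imports Defs
begin

text \<open>Splitting the row sums \<open>\<Sum>\<^sub>j \<langle>x\<^sub>i,x\<^sub>j\<rangle>\<close> and \<open>\<Sum>\<^sub>j \<langle>x\<^sub>i,x\<^sub>j\<rangle>\<^sup>2\<close> of the Gram matrix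
  by the value of the entry, tightness fixes the number \<open>N\<^sub>a\<close> of entries equal to \<open>a\<close> in
  every row, so all row sums equal one number \<open>r\<close>. Testing the frame identity on
  \<open>s = \<Sum>\<^sub>j x\<^sub>j\<close> gives \<open>N r\<^sup>2 = (N/n) N r\<close>, hence \<open>r = 0\<close> or \<open>r = N/n\<close>; multiplying
  \<open>r\<close> by \<open>a + b\<close> and eliminating \<open>N\<^sub>a\<close> turns these two cases into the two equations.\<close>

lemma sum_inner_two_values:
  fixes S :: "'a::real_inner set"
  assumes "finite S" and x: "x \<in> S" and "x \<bullet> x = 1"
    and two: "\<And>y. y \<in> S \<Longrightarrow> y \<noteq> x \<Longrightarrow> x \<bullet> y = a \<or> x \<bullet> y = b"
  shows "(\<Sum>y\<in>S. f (x \<bullet> y)) = f 1 + real (card {y\<in>S. y \<noteq> x \<and> x \<bullet> y = a}) * f a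
            + real (card {y\<in>S. y \<noteq> x \<and> x \<bullet> y \<noteq> a}) * f b"
    and "real (card {y\<in>S. y \<noteq> x \<and> x \<bullet> y = a}) + real (card {y\<in>S. y \<noteq> x \<and> x \<bullet> y \<noteq> a})
           = real (card S) - 1"
proof -
  define A where "A = {y\<in>S. y \<noteq> x \<and> x \<bullet> y = a}"
  define B where "B = {y\<in>S. y \<noteq> x \<and> x \<bullet> y \<noteq> a}"
  have fin: "finite A" "finite B" using \<open>finite S\<close> by (auto simp: A_def B_def)
  have split: "S - {x} = A \<union> B" and disj: "A \<inter> B = {}" by (auto simp: A_def B_def)
  have "(\<Sum>y\<in>S. f (x \<bullet> y)) = f (x \<bullet> x) + (\<Sum>y\<in>A. f (x \<bullet> y)) + (\<Sum>y\<in>B. f (x \<bullet> y))"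
    using \<open>finite S\<close> x by (simp add: sum.remove split sum.union_disjoint[OF fin disj])
  also have "(\<Sum>y\<in>A. f (x \<bullet> y)) = (\<Sum>y\<in>A. f a)"
    by (rule sum.cong) (auto simp: A_def)
  also have "(\<Sum>y\<in>B. f (x \<bullet> y)) = (\<Sum>y\<in>B. f b)"
    by (rule sum.cong) (use two in \<open>auto simp: B_def\<close>)
  finally show "(\<Sum>y\<in>S. f (x \<bullet> y)) = f 1 + real (card A) * f a + real (card B) * f b"
    using \<open>x \<bullet> x = 1\<close> by simp
  have "card A + card B = card S - 1"
    using card_Un_disjoint[OF fin disj] \<open>finite S\<close> x by (simp flip: split)
  moreover have "card S \<ge> 1" using \<open>finite S\<close> x by (auto simp: Suc_le_eq card_gt_0_iff)
  ultimately show "real (card A) + real (card B) = real (card S) - 1"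
    by (metis of_nat_1 of_nat_add of_nat_diff)
qed

lemma constant_row_sum_of_tight_frame:
  fixes S :: "'a::real_inner set"
  assumes "finite S" "S \<noteq> {}"
    and tight: "\<And>v. (\<Sum>y\<in>S. (v \<bullet> y)\<^sup>2) = c * (norm v)\<^sup>2"
    and row: "\<And>x. x \<in> S \<Longrightarrow> (\<Sum>y\<in>S. x \<bullet> y) = r"
  shows "r = 0 \<or> r = c"
proof -
  define s where "s = (\<Sum>y\<in>S. y)"
  have inner_s: "z \<bullet> s = r" if "z \<in> S" for z
    using row[OF that] by (simp add: s_def inner_sum_right)
  have "(norm s)\<^sup>2 = (\<Sum>z\<in>S. z) \<bullet> s"
    by (simp add: power2_norm_eq_inner s_def)
  also have "\<dots> = (\<Sum>z\<in>S. z \<bullet> s)"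
    by (rule inner_sum_left)
  also have "\<dots> = card S * r"
    by (simp add: inner_s)
  finally have "(norm s)\<^sup>2 = card S * r" .
  moreover have "(\<Sum>y\<in>S. (s \<bullet> y)\<^sup>2) = card S * r\<^sup>2"
    by (simp add: inner_commute[of s] inner_s)
  ultimately have "card S * (r * (r - c)) = 0"
    using tight[of s] by (simp add: power2_eq_square algebra_simps)
  with \<open>finite S\<close> \<open>S \<noteq> {}\<close> show ?thesis by simp
qed

lemma two_distance_tight_frame_degree:
  fixes S :: "(real^'n) set"
  assumes frame: "two_distance_tight_frame S a b" and "a\<^sup>2 \<noteq> b\<^sup>2" and x: "x \<in> S"
  defines "N \<equiv> real (card S)" and "n \<equiv> real CARD('n)"
  shows "real (card {y\<in>S. y \<noteq> x \<and> x \<bullet> y = a}) = (N / n - 1 - (N - 1) * b\<^sup>2) / (a\<^sup>2 - b\<^sup>2)"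
    and "(\<Sum>y\<in>S. x \<bullet> y) = 1 + real (card {y\<in>S. y \<noteq> x \<and> x \<bullet> y = a}) * a
           + (N - 1 - real (card {y\<in>S. y \<noteq> x \<and> x \<bullet> y = a})) * b"
proof -
  have "finite S" and "norm x = 1" and tight: "(\<Sum>y\<in>S. (x \<bullet> y)\<^sup>2) = N / n * (norm x)\<^sup>2"
    and two: "\<And>y. y \<in> S \<Longrightarrow> y \<noteq> x \<Longrightarrow> x \<bullet> y = a \<or> x \<bullet> y = b"
    using frame x unfolding two_distance_tight_frame_def N_def n_def by auto
  have "x \<bullet> x = 1"
    using \<open>norm x = 1\<close> by (simp add: norm_eq_1)
  have "N / n = (\<Sum>y\<in>S. (x \<bullet> y)\<^sup>2)"
    using tight \<open>norm x = 1\<close> by simp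
  note split = sum_inner_two_values[OF \<open>finite S\<close> x \<open>x \<bullet> x = 1\<close> two, folded N_def]
  let ?ka = "real (card {y\<in>S. y \<noteq> x \<and> x \<bullet> y = a})"
  have kb: "real (card {y\<in>S. y \<noteq> x \<and> x \<bullet> y \<noteq> a}) = N - 1 - ?ka"
    using split(2) by simp
  have "N / n = 1 + ?ka * a\<^sup>2 + (N - 1 - ?ka) * b\<^sup>2"
    using split(1)[of power2] \<open>N / n = _\<close> by (simp add: kb)
  then have "?ka * (a\<^sup>2 - b\<^sup>2) = N / n - 1 - (N - 1) * b\<^sup>2"
    by (simp add: algebra_simps)
  then show "?ka = (N / n - 1 - (N - 1) * b\<^sup>2) / (a\<^sup>2 - b\<^sup>2)"
    using \<open>a\<^sup>2 \<noteq> b\<^sup>2\<close> by (simp add: field_simps)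
  show "(\<Sum>y\<in>S. x \<bullet> y) = 1 + ?ka * a + (N - 1 - ?ka) * b"
    using split(1)[of id] by (simp add: kb)
qed

lemma two_distance_row_sum_eq_iff:
  fixes a b n N K r :: real
  assumes "n \<noteq> 0" and "a + b \<noteq> 0"
    and K: "K * (a\<^sup>2 - b\<^sup>2) = N / n - 1 - (N - 1) * b\<^sup>2"
    and r: "r = 1 + K * a + (N - 1 - K) * b"
  shows "r = 0 \<longleftrightarrow> - n * (a + b) - n * a * b * (N - 1) = N - n"
    and "r = N / n \<longleftrightarrow> (N - n) * (a + b) - n * a * b * (N - 1) = N - n"
proof -
  have "(a + b) * r = (a + b) + K * (a\<^sup>2 - b\<^sup>2) + (N - 1) * b * (a + b)"
    unfolding r by (simp add: power2_eq_square algebra_simps)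
  also have "\<dots> = (a + b) + N / n - 1 + a * b * (N - 1)"
    unfolding K by (simp add: power2_eq_square algebra_simps)
  finally have rab: "n * (a + b) * r = n * (a + b) + (N - n) + n * a * b * (N - 1)"
    using \<open>n \<noteq> 0\<close> by (simp add: field_simps)
  have "- n * (a + b) - n * a * b * (N - 1) = N - n \<longleftrightarrow> n * (a + b) * r = 0"
    using rab by (simp only: algebra_simps) linarith
  then show "r = 0 \<longleftrightarrow> - n * (a + b) - n * a * b * (N - 1) = N - n"
    using assms(1,2) by simp
  have "n * (a + b) * (r - N / n) = n * (a + b) * r - N * (a + b)"
    using \<open>n \<noteq> 0\<close> by (simp add: algebra_simps)
  then have "(N - n) * (a + b) - n * a * b * (N - 1) = N - n \<longleftrightarrow> n * (a + b) * (r - N / n) = 0"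
    using rab by (simp only: algebra_simps) linarith
  then show "r = N / n \<longleftrightarrow> (N - n) * (a + b) - n * a * b * (N - 1) = N - n"
    using assms(1,2) by simp
qed

theorem theorem2p4:
  fixes S :: "(real^'n) set" and a b :: real
  assumes frame: "two_distance_tight_frame S a b"
    and ab: "a^2 \<noteq> b^2"
  defines "N \<equiv> real (card S)" and "n \<equiv> real CARD('n)"
  shows "(\<forall>x\<in>S. real (card {y\<in>S. y \<noteq> x \<and> x \<bullet> y = a})
              = ((N / n) - 1 - (N - 1) * b^2) / (a^2 - b^2))
       \<and> (- n * (a + b) - n * a * b * (N - 1) = N - n
          \<or> (N - n) * (a + b) - n * a * b * (N - 1) = N - n)
       \<and> (- n * (a + b) - n * a * b * (N - 1) = N - n
          \<longleftrightarrow> (\<forall>x\<in>S. (\<Sum>y\<in>S. x \<bullet> y) = 0))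
       \<and> ((N - n) * (a + b) - n * a * b * (N - 1) = N - n
          \<longleftrightarrow> (\<forall>x\<in>S. (\<Sum>y\<in>S. x \<bullet> y) = N / n))"
proof -
  have "finite S" "S \<noteq> {}" and tight: "\<And>v. (\<Sum>y\<in>S. (v \<bullet> y)\<^sup>2) = N / n * (norm v)\<^sup>2"
    using frame unfolding two_distance_tight_frame_def N_def n_def by auto
  have "n \<noteq> 0" by (simp add: n_def)
  have "a + b \<noteq> 0" using ab by (metis add.inverse_unique power2_minus)
  define K where "K = (N / n - 1 - (N - 1) * b\<^sup>2) / (a\<^sup>2 - b\<^sup>2)"
  define r where "r = 1 + K * a + (N - 1 - K) * b"
  note degree = two_distance_tight_frame_degree[OF frame ab, folded N_def n_def, folded K_def]
  have row: "(\<Sum>y\<in>S. x \<bullet> y) = r" if "x \<in> S" for x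
    using degree[OF that] by (simp add: r_def)
  have "K * (a\<^sup>2 - b\<^sup>2) = N / n - 1 - (N - 1) * b\<^sup>2"
    using ab by (simp add: K_def)
  note row_sum_iff = two_distance_row_sum_eq_iff[OF \<open>n \<noteq> 0\<close> \<open>a + b \<noteq> 0\<close> this r_def]
  have "r = 0 \<or> r = N / n"
    using constant_row_sum_of_tight_frame[OF \<open>finite S\<close> \<open>S \<noteq> {}\<close> tight row] .
  then show ?thesis
    unfolding K_def[symmetric] row_sum_iff[symmetric]
    using degree(1) row \<open>S \<noteq> {}\<close> by auto
qed

end
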